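(* Let $p\in\mathbb{N}$, let $Z_1,\dots,Z_p$ be i.i.d. $N(0,1)$, let $a\ge1$ and $\nu_a=\mathbb{E}(Z_1^2\mid|Z_1|\ge a)$. Then for all $x>0$, $$\mathbb{P}\Big[\sum_{i=1}^p(Z_i^2-\nu_a)\mathbb{1}(|Z_i|\ge a)\le-5\big\{(pe^{-a^2/2}x)^{1/2}+x\big\}\Big]\le e^{-x}.$$ *)

theory Defs
  imports "HOL-Probability.Probability"
begin

definition nu :: "real \<Rightarrow> real" where
  "nu a = (LINT z:{z. \<bar>z\<bar> \<ge> a}|lborel. z\<^sup>2 * std_normal_density z) /
          (LINT z:{z. \<bar>z\<bar> \<ge> a}|lborel. std_normal_density z)"

end

theory Submission
  imports Defs "HOL-Real_Asymp.Real_Asymp"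
begin

(* Chernoff's method for the lower tail. Write Y = (Z^2 - nu_a) 1(|Z| >= a) and phi for the
   standard normal density. For 0 < l <= 1/2, on {|Z| >= a} one has Z^2 - nu_a >= a^2 - nu_a >= -2,
   so exp(-l Y) is bounded by a quadratic in Z^2. Integrating against phi, the linear term vanishes
   by the definition of nu_a and the quadratic term is E[(Z^2 - a^2)^2; |Z| >= a] <= 16 phi(a)
   <= 8 exp(-a^2/2); hence E exp(-l Y) <= exp(4 l^2 exp(-a^2/2)). Independence and Markov's
   inequality bound the probability by exp(4 l^2 B - l t) with B = p exp(-a^2/2), and
   l = min(1/2, sqrt(x/(4B))) makes the exponent at most -x. The bounds a^2 <= nu_a <= a^2 + 2
   follow from integrating by parts on [a, oo) and the Mills-ratio bound
   P(Z >= a) >= a phi(a) / (1 + a^2). *)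

lemma has_bochner_integral_FTC_atLeast:
  fixes f F :: "real \<Rightarrow> real"
  assumes f_borel: "f \<in> borel_measurable borel"
    and deriv: "\<And>x. a \<le> x \<Longrightarrow> DERIV F x :> f x"
    and nonneg: "\<And>x. a \<le> x \<Longrightarrow> 0 \<le> f x"
    and lim: "(F \<longlongrightarrow> T) at_top"
  shows "has_bochner_integral lborel (\<lambda>x. indicator {a..} x * f x) (T - F a)"
proof (rule has_bochner_integral_nn_integral)
  have "F a \<le> F y" if "a \<le> y" for y
    using deriv nonneg that by (intro DERIV_nonneg_imp_nondecreasing[of a y F]) (auto intro: order_trans)
  then have "F a \<le> T"
    by (intro tendsto_lowerbound[OF lim]) (auto simp: eventually_at_top_linorder)
  then show "0 \<le> T - F a" by simp
  have "(\<integral>\<^sup>+x. ennreal (indicator {a..} x * f x) \<partial>lborel) = (\<integral>\<^sup>+x. ennreal (f x) * indicator {a..} x \<partial>lborel)"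
    by (intro nn_integral_cong) (auto split: split_indicator)
  also have "\<dots> = T - F a"
    by (rule nn_integral_FTC_atLeast[OF f_borel deriv nonneg lim])
  finally show "(\<integral>\<^sup>+x. ennreal (indicator {a..} x * f x) \<partial>lborel) = ennreal (T - F a)" .
qed (use f_borel nonneg in \<open>auto split: split_indicator\<close>)

lemma std_normal_density_minus [simp]: "std_normal_density (- z) = std_normal_density z"
  by (simp add: std_normal_density_def)

lemma DERIV_std_normal_density: "DERIV std_normal_density x :> - x * std_normal_density x"
proof -
  define c where "c = 1 / sqrt (2 * pi)"
  have "DERIV (\<lambda>x. c * exp (- x\<^sup>2 / 2)) x :> - x * (c * exp (- x\<^sup>2 / 2))"
    by (auto intro!: derivative_eq_intros)
  then show ?thesis
    by (simp add: std_normal_density_def[abs_def] c_def)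
qed

lemma DERIV_std_normal_density_chain [derivative_intros]:
  "(g has_real_derivative g') (at x within S) \<Longrightarrow>
    ((\<lambda>x. std_normal_density (g x)) has_real_derivative - g x * std_normal_density (g x) * g') (at x within S)"
  using DERIV_chain2[OF DERIV_std_normal_density] by (simp add: has_field_derivative_subset)

lemma std_normal_density_le_half_exp: "std_normal_density z \<le> exp (- z\<^sup>2 / 2) / 2"
proof -
  have "2 \<le> sqrt (2 * pi)" using pi_gt3 by (simp add: real_le_rsqrt)
  then show ?thesis
    unfolding std_normal_density_def by (simp add: field_simps)
qed

lemma has_bochner_integral_std_normal_tail_sq_minus_one:
  assumes "1 \<le> a"
  shows "has_bochner_integral lborel
           (\<lambda>z. indicator {a..} z * ((z\<^sup>2 - 1) * std_normal_density z)) (a * std_normal_density a)"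
proof -
  have "has_bochner_integral lborel (\<lambda>z. indicator {a..} z * ((z\<^sup>2 - 1) * std_normal_density z))
          (0 - (- a * std_normal_density a))"
  proof (rule has_bochner_integral_FTC_atLeast)
    fix x assume "a \<le> x"
    then show "0 \<le> (x\<^sup>2 - 1) * std_normal_density x"
      using assms by (auto intro: one_le_power)
    show "DERIV (\<lambda>z. - z * std_normal_density z) x :> (x\<^sup>2 - 1) * std_normal_density x"
      by (auto intro!: derivative_eq_intros simp: algebra_simps power2_eq_square)
  next
    show "((\<lambda>z. - z * std_normal_density z) \<longlongrightarrow> 0) at_top"
      unfolding std_normal_density_def by real_asymp
  qed simp
  then show ?thesis by simp
qed

(* The integrand is the derivative of -z phi(z) / (1 + z^2) and is at most phi(z). *)
lemma has_bochner_integral_std_normal_tail_mills: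
  assumes "1 \<le> a"
  shows "has_bochner_integral lborel
           (\<lambda>z. indicator {a..} z * (std_normal_density z * (z^4 + 2*z\<^sup>2 - 1) / (1 + z\<^sup>2)\<^sup>2))
           (a * std_normal_density a / (1 + a\<^sup>2))"
proof -
  have "has_bochner_integral lborel
          (\<lambda>z. indicator {a..} z * (std_normal_density z * (z^4 + 2*z\<^sup>2 - 1) / (1 + z\<^sup>2)\<^sup>2))
          (0 - (- a * std_normal_density a / (1 + a\<^sup>2)))"
  proof (rule has_bochner_integral_FTC_atLeast)
    fix x assume "a \<le> x"
    then have "1 \<le> x\<^sup>2" using assms by (auto intro: one_le_power)
    then have "1 \<le> x\<^sup>2 * x\<^sup>2"
      using mult_mono[of 1 "x\<^sup>2" 1 "x\<^sup>2"] by simp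
    then show "0 \<le> std_normal_density x * (x^4 + 2*x\<^sup>2 - 1) / (1 + x\<^sup>2)\<^sup>2"
      using \<open>1 \<le> x\<^sup>2\<close> by (simp add: power4_eq_xxxx power2_eq_square)
    have "1 + x\<^sup>2 \<noteq> 0" using zero_le_power2[of x] by linarith
    then show "DERIV (\<lambda>z. - z * std_normal_density z / (1 + z\<^sup>2)) x
                 :> std_normal_density x * (x^4 + 2*x\<^sup>2 - 1) / (1 + x\<^sup>2)\<^sup>2"
      by (auto intro!: derivative_eq_intros simp: field_simps power2_eq_square power4_eq_xxxx)
         (simp add: minus_divide_left algebra_simps)
  next
    show "((\<lambda>z. - z * std_normal_density z / (1 + z\<^sup>2)) \<longlongrightarrow> 0) at_top"
      unfolding std_normal_density_def by real_asymp
  qed simp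
  then show ?thesis by simp
qed

lemma has_bochner_integral_std_normal_tail_centered_fourth:
  assumes "0 \<le> a"
  shows "has_bochner_integral lborel
           (\<lambda>z. indicator {a..} z * (z * (z\<^sup>2 - a\<^sup>2)\<^sup>2 * std_normal_density z)) (8 * std_normal_density a)"
proof -
  define F where "F z = - ((z\<^sup>2 - a\<^sup>2)\<^sup>2 + 4 * (z\<^sup>2 - a\<^sup>2) + 8) * std_normal_density z" for z
  have "has_bochner_integral lborel
          (\<lambda>z. indicator {a..} z * (z * (z\<^sup>2 - a\<^sup>2)\<^sup>2 * std_normal_density z)) (0 - F a)"
  proof (rule has_bochner_integral_FTC_atLeast)
    fix x assume "a \<le> x"
    then show "0 \<le> x * (x\<^sup>2 - a\<^sup>2)\<^sup>2 * std_normal_density x"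
      using assms by simp
    show "DERIV F x :> x * (x\<^sup>2 - a\<^sup>2)\<^sup>2 * std_normal_density x"
      unfolding F_def[abs_def] by (auto intro!: derivative_eq_intros simp: algebra_simps power2_eq_square)
  next
    show "(F \<longlongrightarrow> 0) at_top"
      unfolding F_def std_normal_density_def by real_asymp
  qed simp
  then show ?thesis by (simp add: F_def)
qed

lemma integrable_std_normal_sq_minus_power:
  "integrable lborel (\<lambda>z. (z\<^sup>2 - c) ^ k * std_normal_density z)"
proof -
  have "(z\<^sup>2 - c) ^ k * std_normal_density z
          = (\<Sum>j\<le>k. of_nat (k choose j) * (- c) ^ (k - j) * (std_normal_density z * (z\<^sup>2) ^ j))" for z
    using binomial_ring[of "z\<^sup>2" "- c" k] by (simp add: sum_distrib_left mult_ac)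
  moreover have "integrable lborel (\<lambda>z. std_normal_density z * (z\<^sup>2) ^ j)" for j
    using integrable_std_normal_moment[of "2 * j"] by (simp add: power_mult)
  ultimately show ?thesis
    by (simp add: integrable_sum integrable_mult_right)
qed

lemma integrable_indicator_std_normal_moment:
  "A \<in> sets borel \<Longrightarrow> integrable lborel (\<lambda>z. indicator A z * (z ^ k * std_normal_density z))"
  using integrable_mult_indicator[OF _ integrable_std_normal_moment[of k]] by (simp add: mult.commute)

lemma integral_indicator_abs_ge_even:
  fixes f :: "real \<Rightarrow> real"
  assumes even: "\<And>z. f (- z) = f z"
    and int: "integrable lborel (\<lambda>z. indicator {a..} z * f z)"
    and "0 < a"
  shows "(\<integral>z. indicator {z. a \<le> \<bar>z\<bar>} z * f z \<partial>lborel) = 2 * (\<integral>z. indicator {a..} z * f z \<partial>lborel)"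
proof -
  define g where "g z = indicator {a..} z * f z" for z
  have split: "indicator {z. a \<le> \<bar>z\<bar>} z * f z = g z + g (- z)" for z
    using \<open>0 < a\<close> even[of z] by (auto simp: g_def split: split_indicator)
  have "integrable lborel g"
    using int by (simp add: g_def[abs_def])
  moreover from this have "integrable lborel (\<lambda>z. g (- z))"
    using lborel_integrable_real_affine[of g "-1" 0] by simp
  moreover have "(\<integral>z. g (- z) \<partial>lborel) = (\<integral>z. g z \<partial>lborel)"
    using lborel_integral_real_affine[of "-1" g 0] by simp
  ultimately show ?thesis
    unfolding split by (simp add: g_def[abs_def])
qed

lemma nu_eq_upper_tail_ratio:
  assumes "0 < a"
  shows "nu a = (\<integral>z. indicator {a..} z * (z\<^sup>2 * std_normal_density z) \<partial>lborel)
              / (\<integral>z. indicator {a..} z * std_normal_density z \<partial>lborel)"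
proof -
  have "(\<integral>z. indicator {z. a \<le> \<bar>z\<bar>} z * (z\<^sup>2 * std_normal_density z) \<partial>lborel)
          = 2 * (\<integral>z. indicator {a..} z * (z\<^sup>2 * std_normal_density z) \<partial>lborel)"
    using integrable_indicator_std_normal_moment[of "{a..}" 2] assms
    by (intro integral_indicator_abs_ge_even) auto
  moreover have "(\<integral>z. indicator {z. a \<le> \<bar>z\<bar>} z * std_normal_density z \<partial>lborel)
          = 2 * (\<integral>z. indicator {a..} z * std_normal_density z \<partial>lborel)"
    using integrable_indicator_std_normal_moment[of "{a..}" 0] assms
    by (intro integral_indicator_abs_ge_even) auto
  ultimately show ?thesis
    unfolding nu_def set_lebesgue_integral_def by simp
qed

lemma std_normal_upper_tail_ge_mills:
  assumes "1 \<le> a"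
  shows "a * std_normal_density a / (1 + a\<^sup>2) \<le> (\<integral>z. indicator {a..} z * std_normal_density z \<partial>lborel)"
proof -
  note mills = has_bochner_integral_std_normal_tail_mills[OF assms]
  have "a * std_normal_density a / (1 + a\<^sup>2)
          = (\<integral>z. indicator {a..} z * (std_normal_density z * (z^4 + 2*z\<^sup>2 - 1) / (1 + z\<^sup>2)\<^sup>2) \<partial>lborel)"
    using mills by (rule has_bochner_integral_integral_eq[symmetric])
  also have "\<dots> \<le> (\<integral>z. indicator {a..} z * std_normal_density z \<partial>lborel)"
  proof (rule integral_mono)
    show "integrable lborel (\<lambda>z. indicator {a..} z * std_normal_density z)"
      using integrable_indicator_std_normal_moment[of "{a..}" 0] by simp
    fix z :: real
    have "z^4 + 2*z\<^sup>2 - 1 \<le> (1 + z\<^sup>2)\<^sup>2"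
      by (simp add: power2_eq_square power4_eq_xxxx algebra_simps)
    moreover have "0 < (1 + z\<^sup>2)\<^sup>2"
      using zero_le_power2[of z] by (intro zero_less_power) linarith
    ultimately have "std_normal_density z * ((z^4 + 2*z\<^sup>2 - 1) / (1 + z\<^sup>2)\<^sup>2) \<le> std_normal_density z"
      using mult_left_mono[of "(z^4 + 2*z\<^sup>2 - 1) / (1 + z\<^sup>2)\<^sup>2" 1 "std_normal_density z"] by simp
    then show "indicator {a..} z * (std_normal_density z * (z^4 + 2*z\<^sup>2 - 1) / (1 + z\<^sup>2)\<^sup>2)
                 \<le> indicator {a..} z * std_normal_density z"
      by (auto split: split_indicator)
  qed (use mills in \<open>rule integrable.intros\<close>)
  finally show ?thesis .
qed

lemma std_normal_upper_tail_pos: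
  assumes "1 \<le> a"
  shows "0 < (\<integral>z. indicator {a..} z * std_normal_density z \<partial>lborel)"
proof -
  have "0 < a * std_normal_density a / (1 + a\<^sup>2)"
    using assms by (intro divide_pos_pos mult_pos_pos normal_density_pos) (auto simp: add_pos_nonneg)
  then show ?thesis
    using std_normal_upper_tail_ge_mills[OF assms] by linarith
qed

lemma nu_ge_sq:
  assumes "1 \<le> a"
  shows "a\<^sup>2 \<le> nu a"
proof -
  have "(\<integral>z. indicator {a..} z * (a\<^sup>2 * std_normal_density z) \<partial>lborel)
          \<le> (\<integral>z. indicator {a..} z * (z\<^sup>2 * std_normal_density z) \<partial>lborel)"
  proof (rule integral_mono)
    show "integrable lborel (\<lambda>z. indicator {a..} z * (a\<^sup>2 * std_normal_density z))"
      using integrable_mult_right[OF integrable_indicator_std_normal_moment[of "{a..}" 0], of "a\<^sup>2"]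
      by (simp add: mult_ac)
    show "integrable lborel (\<lambda>z. indicator {a..} z * (z\<^sup>2 * std_normal_density z))"
      using integrable_indicator_std_normal_moment[of "{a..}" 2] by simp
    fix z
    show "indicator {a..} z * (a\<^sup>2 * std_normal_density z) \<le> indicator {a..} z * (z\<^sup>2 * std_normal_density z)"
      using assms by (auto split: split_indicator intro!: mult_right_mono power_mono)
  qed
  moreover have "(\<integral>z. indicator {a..} z * (a\<^sup>2 * std_normal_density z) \<partial>lborel)
                   = a\<^sup>2 * (\<integral>z. indicator {a..} z * std_normal_density z \<partial>lborel)"
    by (simp add: mult.left_commute[of "indicator _ _"])
  ultimately show ?thesis
    using std_normal_upper_tail_pos[OF assms] assms
    by (simp add: nu_eq_upper_tail_ratio field_simps)
qed

lemma nu_le_sq_plus_two: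
  assumes "1 \<le> a"
  shows "nu a \<le> a\<^sup>2 + 2"
proof -
  define Q where "Q = (\<integral>z. indicator {a..} z * std_normal_density z \<partial>lborel)"
  define M where "M = (\<integral>z. indicator {a..} z * (z\<^sup>2 * std_normal_density z) \<partial>lborel)"
  have "a * std_normal_density a = (\<integral>z. indicator {a..} z * ((z\<^sup>2 - 1) * std_normal_density z) \<partial>lborel)"
    using has_bochner_integral_std_normal_tail_sq_minus_one[OF assms]
    by (rule has_bochner_integral_integral_eq[symmetric])
  also have "\<dots> = M - Q"
    using integrable_indicator_std_normal_moment[of "{a..}" 2] integrable_indicator_std_normal_moment[of "{a..}" 0]
    by (simp add: M_def Q_def left_diff_distrib right_diff_distrib)
  finally have "M = Q + a * std_normal_density a" by simp
  also have "\<dots> \<le> Q + (1 + a\<^sup>2) * Q"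
    using std_normal_upper_tail_ge_mills[OF assms] by (simp add: Q_def field_simps add_pos_nonneg)
  finally have "M \<le> Q * (a\<^sup>2 + 2)"
    by (simp add: algebra_simps)
  moreover have "M = Q * nu a" "0 < Q"
    using assms std_normal_upper_tail_pos[OF assms] by (simp_all add: nu_eq_upper_tail_ratio M_def Q_def)
  ultimately show ?thesis
    by (simp add: mult_le_cancel_left_pos)
qed

lemma integral_abs_ge_sq_minus_nu:
  assumes "1 \<le> a"
  shows "(\<integral>z. indicator {z. a \<le> \<bar>z\<bar>} z * ((z\<^sup>2 - nu a) * std_normal_density z) \<partial>lborel) = 0"
proof -
  define Q where "Q = (\<integral>z. indicator {z. a \<le> \<bar>z\<bar>} z * std_normal_density z \<partial>lborel)"
  define M where "M = (\<integral>z. indicator {z. a \<le> \<bar>z\<bar>} z * (z\<^sup>2 * std_normal_density z) \<partial>lborel)"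
  have "Q = 2 * (\<integral>z. indicator {a..} z * std_normal_density z \<partial>lborel)"
    unfolding Q_def using integrable_indicator_std_normal_moment[of "{a..}" 0] assms
    by (intro integral_indicator_abs_ge_even) auto
  then have "Q \<noteq> 0"
    using std_normal_upper_tail_pos[OF assms] by simp
  moreover have "nu a = M / Q"
    by (simp add: nu_def set_lebesgue_integral_def M_def Q_def)
  moreover have int: "integrable lborel (\<lambda>z. indicator {z. a \<le> \<bar>z\<bar>} z * (z ^ k * std_normal_density z))" for k
    by (rule integrable_indicator_std_normal_moment) simp
  have "(\<integral>z. indicator {z. a \<le> \<bar>z\<bar>} z * ((z\<^sup>2 - nu a) * std_normal_density z) \<partial>lborel) = M - nu a * Q"
    using int[of 2] int[of 0]
    by (simp add: M_def Q_def left_diff_distrib right_diff_distrib mult.left_commute[of "indicator _ _" "nu a"])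
  ultimately show ?thesis
    by simp
qed

lemma integral_abs_ge_sq_minus_sq_le:
  assumes "1 \<le> a"
  shows "(\<integral>z. indicator {z. a \<le> \<bar>z\<bar>} z * ((z\<^sup>2 - a\<^sup>2)\<^sup>2 * std_normal_density z) \<partial>lborel)
           \<le> 8 * exp (- a\<^sup>2 / 2)"
proof -
  note fourth = has_bochner_integral_std_normal_tail_centered_fourth[of a]
  have int: "integrable lborel (\<lambda>z. indicator {a..} z * ((z\<^sup>2 - a\<^sup>2)\<^sup>2 * std_normal_density z))"
    using integrable_mult_indicator[OF _ integrable_std_normal_sq_minus_power[of "a\<^sup>2" 2], of "{a..}"]
    by simp
  have "(\<integral>z. indicator {z. a \<le> \<bar>z\<bar>} z * ((z\<^sup>2 - a\<^sup>2)\<^sup>2 * std_normal_density z) \<partial>lborel)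
          = 2 * (\<integral>z. indicator {a..} z * ((z\<^sup>2 - a\<^sup>2)\<^sup>2 * std_normal_density z) \<partial>lborel)"
    using int assms by (intro integral_indicator_abs_ge_even) auto
  also have "(\<integral>z. indicator {a..} z * ((z\<^sup>2 - a\<^sup>2)\<^sup>2 * std_normal_density z) \<partial>lborel)
               \<le> (\<integral>z. indicator {a..} z * (z * (z\<^sup>2 - a\<^sup>2)\<^sup>2 * std_normal_density z) \<partial>lborel)"
    using assms mult_right_mono[of 1 _ "(_\<^sup>2 - a\<^sup>2)\<^sup>2 * std_normal_density _"]
    by (intro integral_mono int integrable.intros[OF fourth])
       (auto split: split_indicator simp: mult.assoc)
  also have "\<dots> = 8 * std_normal_density a"
    using fourth assms by (simp add: has_bochner_integral_integral_eq)
  finally show ?thesis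
    using std_normal_density_le_half_exp[of a] by linarith
qed

lemma exp_le_quadratic_of_nonpos:
  fixes u :: real
  assumes "u \<le> 0"
  shows "exp u \<le> 1 + u + u\<^sup>2 / 2"
proof -
  have "1 + 0 + 0\<^sup>2 / 2 - exp 0 \<le> 1 + u + u\<^sup>2 / 2 - exp u"
  proof (rule DERIV_nonpos_imp_nonincreasing[OF assms])
    fix x :: real
    have "DERIV (\<lambda>u. 1 + u + u\<^sup>2 / 2 - exp u) x :> 1 + x - exp x"
      by (auto intro!: derivative_eq_intros)
    then show "\<exists>y. DERIV (\<lambda>u. 1 + u + u\<^sup>2 / 2 - exp u) x :> y \<and> y \<le> 0"
      using exp_ge_add_one_self[of x] by force
  qed
  then show ?thesis by simp
qed

(* Stated with (s - b)^2 rather than (s - v)^2 so that, for s = z^2, v = nu a, b = a^2, the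
   right-hand side integrates over {|z| >= a} to 1 plus a multiple of E[(Z^2 - a^2)^2; |Z| >= a]. *)
lemma exp_neg_excess_le_quadratic:
  fixes l s v b :: real
  assumes "0 < l" "l \<le> 1/2" "b \<le> s" "b \<le> v" "v \<le> b + 2"
  shows "exp (- l * (s - v)) \<le> 1 - (l + l\<^sup>2 * (v - b)) * (s - v) + l\<^sup>2 / 2 * (s - b)\<^sup>2"
proof -
  have rhs: "1 - (l + l\<^sup>2 * (v - b)) * (s - v) + l\<^sup>2 / 2 * (s - b)\<^sup>2
               = 1 - l * (s - v) + l\<^sup>2 / 2 * (s - v)\<^sup>2 + l\<^sup>2 / 2 * (v - b)\<^sup>2"
    by (simp add: power2_eq_square field_simps)
  show ?thesis
  proof (cases "v \<le> s")
    case True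
    then have "exp (- l * (s - v)) \<le> 1 - l * (s - v) + (l * (s - v))\<^sup>2 / 2"
      using exp_le_quadratic_of_nonpos[of "- l * (s - v)"] \<open>0 < l\<close> by simp
    moreover have "0 \<le> l\<^sup>2 / 2 * (v - b)\<^sup>2"
      by simp
    ultimately show ?thesis
      unfolding rhs power_mult_distrib by linarith
  next
    case False
    have "l * (v - s) \<le> 1/2 * 2"
      using assms False by (intro mult_mono) auto
    then have "exp (l * (v - s)) \<le> 1 + l * (v - s) + (l * (v - s))\<^sup>2"
      using False \<open>0 < l\<close> by (intro exp_bound) auto
    moreover have "- l * (s - v) = l * (v - s)" "l * (v - s) = - (l * (s - v))"
      "(l * (v - s))\<^sup>2 = l\<^sup>2 * (s - v)\<^sup>2"
      by (simp_all only: power_mult_distrib power2_commute[of s v]) (simp_all add: algebra_simps)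
    moreover have "l\<^sup>2 * (s - v)\<^sup>2 \<le> l\<^sup>2 * (v - b)\<^sup>2"
      using False assms by (subst power2_commute) (intro mult_left_mono power_mono, auto)
    ultimately show ?thesis
      unfolding rhs by simp
  qed
qed

definition tail_excess :: "real \<Rightarrow> real \<Rightarrow> real" where
  "tail_excess a z = (z\<^sup>2 - nu a) * indicator {y. \<bar>y\<bar> \<ge> a} z"

lemma borel_measurable_tail_excess [measurable]: "tail_excess a \<in> borel_measurable borel"
  unfolding tail_excess_def[abs_def] by measurable

lemma std_normal_tail_excess_mgf:
  assumes "1 \<le> a" "0 < l" "l \<le> 1/2"
  shows "integrable lborel (\<lambda>z. std_normal_density z * exp (- l * tail_excess a z))"
    and "(\<integral>z. std_normal_density z * exp (- l * tail_excess a z) \<partial>lborel) \<le> 1 + 4 * l\<^sup>2 * exp (- a\<^sup>2 / 2)"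
proof -
  let ?E = "{z::real. a \<le> \<bar>z\<bar>}"
  define c where "c = l + l\<^sup>2 * (nu a - a\<^sup>2)"
  define R where "R z = std_normal_density z - c * (indicator ?E z * ((z\<^sup>2 - nu a) * std_normal_density z))
                     + l\<^sup>2 / 2 * (indicator ?E z * ((z\<^sup>2 - a\<^sup>2)\<^sup>2 * std_normal_density z))" for z
  have int_E: "integrable lborel (\<lambda>z. indicator ?E z * ((z\<^sup>2 - b) ^ k * std_normal_density z))" for b k
    by (rule integrable_mult_indicator[OF _ integrable_std_normal_sq_minus_power, simplified]) simp
  have int_R: "integrable lborel R"
    unfolding R_def[abs_def] using int_E[of "nu a" 1] int_E[of "a\<^sup>2" 2] by simp
  have le_R: "std_normal_density z * exp (- l * tail_excess a z) \<le> R z" for z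
  proof (cases "a \<le> \<bar>z\<bar>")
    case True
    then have "a\<^sup>2 \<le> z\<^sup>2"
      using assms(1) by (metis abs_le_square_iff abs_of_nonneg order.trans zero_le_one)
    then have "exp (- l * (z\<^sup>2 - nu a)) \<le> 1 - c * (z\<^sup>2 - nu a) + l\<^sup>2 / 2 * (z\<^sup>2 - a\<^sup>2)\<^sup>2"
      unfolding c_def using assms nu_ge_sq nu_le_sq_plus_two
      by (intro exp_neg_excess_le_quadratic) auto
    then have "std_normal_density z * exp (- l * (z\<^sup>2 - nu a))
                 \<le> std_normal_density z * (1 - c * (z\<^sup>2 - nu a) + l\<^sup>2 / 2 * (z\<^sup>2 - a\<^sup>2)\<^sup>2)"
      by (intro mult_left_mono) auto
    with True show ?thesis
      by (simp add: R_def tail_excess_def algebra_simps)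
  qed (simp add: R_def tail_excess_def)
  show int: "integrable lborel (\<lambda>z. std_normal_density z * exp (- l * tail_excess a z))"
    by (rule Bochner_Integration.integrable_bound[OF int_R])
       (use le_R in \<open>auto intro: order_trans[OF _ abs_ge_self]\<close>)
  have "(\<integral>z. std_normal_density z * exp (- l * tail_excess a z) \<partial>lborel) \<le> (\<integral>z. R z \<partial>lborel)"
    by (rule integral_mono[OF int int_R le_R])
  also have "\<dots> = 1 + l\<^sup>2 / 2 * (\<integral>z. indicator ?E z * ((z\<^sup>2 - a\<^sup>2)\<^sup>2 * std_normal_density z) \<partial>lborel)"
    unfolding R_def using int_E[of "nu a" 1] int_E[of "a\<^sup>2" 2] integral_abs_ge_sq_minus_nu[OF assms(1)]
    by simp
  also have "\<dots> \<le> 1 + l\<^sup>2 / 2 * (8 * exp (- a\<^sup>2 / 2))"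
    using integral_abs_ge_sq_minus_sq_le[OF assms(1)] by (intro add_left_mono mult_left_mono) auto
  finally show "(\<integral>z. std_normal_density z * exp (- l * tail_excess a z) \<partial>lborel) \<le> 1 + 4 * l\<^sup>2 * exp (- a\<^sup>2 / 2)"
    by simp
qed

lemma (in prob_space) std_normal_tail_excess_mgf_le_exp:
  assumes "distributed M lborel Y std_normal_density" "1 \<le> a" "0 < l" "l \<le> 1/2"
  shows "integrable M (\<lambda>\<omega>. exp (- l * tail_excess a (Y \<omega>)))"
    and "expectation (\<lambda>\<omega>. exp (- l * tail_excess a (Y \<omega>))) \<le> exp (4 * l\<^sup>2 * exp (- a\<^sup>2 / 2))"
proof -
  show "integrable M (\<lambda>\<omega>. exp (- l * tail_excess a (Y \<omega>)))"
    using distributed_integrable[OF assms(1), of "\<lambda>z. exp (- l * tail_excess a z)"]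
      std_normal_tail_excess_mgf(1)[OF assms(2-4)] by simp
  have "expectation (\<lambda>\<omega>. exp (- l * tail_excess a (Y \<omega>)))
          = (\<integral>z. std_normal_density z * exp (- l * tail_excess a z) \<partial>lborel)"
    using distributed_integral[OF assms(1), of "\<lambda>z. exp (- l * tail_excess a z)"] by simp
  also have "\<dots> \<le> 1 + 4 * l\<^sup>2 * exp (- a\<^sup>2 / 2)"
    by (rule std_normal_tail_excess_mgf(2)[OF assms(2-4)])
  also have "\<dots> \<le> exp (4 * l\<^sup>2 * exp (- a\<^sup>2 / 2))"
    using exp_ge_add_one_self by (simp add: add.commute)
  finally show "expectation (\<lambda>\<omega>. exp (- l * tail_excess a (Y \<omega>))) \<le> exp (4 * l\<^sup>2 * exp (- a\<^sup>2 / 2))" .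
qed

lemma (in prob_space) indep_sum_lower_tail_Chernoff:
  fixes X :: "'i \<Rightarrow> 'a \<Rightarrow> real" and l c t :: real
  assumes "finite I" and indep: "indep_vars (\<lambda>_. borel) X I" and "0 < l"
    and int: "\<And>i. i \<in> I \<Longrightarrow> integrable M (\<lambda>\<omega>. exp (- l * X i \<omega>))"
    and mgf: "\<And>i. i \<in> I \<Longrightarrow> expectation (\<lambda>\<omega>. exp (- l * X i \<omega>)) \<le> exp c"
  shows "prob {\<omega> \<in> space M. (\<Sum>i\<in>I. X i \<omega>) \<le> - t} \<le> exp (card I * c - l * t)"
proof -
  have indep_exp: "indep_vars (\<lambda>_. borel) (\<lambda>i \<omega>. exp (- l * X i \<omega>)) I"
    by (rule indep_vars_compose2[OF indep]) simp
  have prod: "exp (- l * (\<Sum>i\<in>I. X i \<omega>)) = (\<Prod>i\<in>I. exp (- l * X i \<omega>))" for \<omega>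
    by (simp add: sum_distrib_left exp_sum \<open>finite I\<close>)
  have "expectation (\<lambda>\<omega>. exp (- l * (\<Sum>i\<in>I. X i \<omega>))) = (\<Prod>i\<in>I. expectation (\<lambda>\<omega>. exp (- l * X i \<omega>)))"
    unfolding prod using \<open>finite I\<close> indep_exp int by (rule indep_vars_lebesgue_integral)
  also have "\<dots> \<le> (\<Prod>i\<in>I. exp c)"
    using mgf by (intro prod_mono) (auto intro: integral_nonneg_AE)
  also have "\<dots> = exp (card I * c)"
    by (simp add: exp_of_nat_mult)
  finally have E: "expectation (\<lambda>\<omega>. exp (- l * (\<Sum>i\<in>I. X i \<omega>))) \<le> exp (card I * c)" .
  have "s \<le> - t \<longleftrightarrow> exp (l * t) \<le> exp (- l * s)" for s
    using \<open>0 < l\<close> mult_le_cancel_left_pos[of l t "- s"] by (simp add: le_minus_iff)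
  then have "{\<omega> \<in> space M. (\<Sum>i\<in>I. X i \<omega>) \<le> - t}
               = {\<omega> \<in> space M. exp (l * t) \<le> exp (- l * (\<Sum>i\<in>I. X i \<omega>))}"
    by blast
  moreover have "integrable M (\<lambda>\<omega>. exp (- l * (\<Sum>i\<in>I. X i \<omega>)))"
    unfolding prod using \<open>finite I\<close> indep_exp int by (rule indep_vars_integrable)
  ultimately have "prob {\<omega> \<in> space M. (\<Sum>i\<in>I. X i \<omega>) \<le> - t}
                     \<le> expectation (\<lambda>\<omega>. exp (- l * (\<Sum>i\<in>I. X i \<omega>))) / exp (l * t)"
    by (simp only:) (intro integral_Markov_inequality_measure, auto)
  also have "\<dots> \<le> exp (card I * c) / exp (l * t)"
    using E by (simp add: divide_right_mono)
  finally show ?thesis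
    by (simp add: exp_diff)
qed

lemma Chernoff_parameter_choice:
  fixes B x :: real
  assumes "0 \<le> B" "0 < x"
  obtains l where "0 < l" "l \<le> 1/2" "4 * l\<^sup>2 * B - l * (5 * (sqrt (B * x) + x)) \<le> - x"
proof (cases "x \<le> B")
  case True
  define l where "l = sqrt (x / (4 * B))"
  have "0 < B" using True \<open>0 < x\<close> by simp
  have "l\<^sup>2 = x / (4 * B)"
    unfolding l_def using \<open>0 < B\<close> \<open>0 < x\<close> by simp
  have "l * sqrt (B * x) = x / 2"
    unfolding l_def real_sqrt_mult[symmetric] using \<open>0 < B\<close> \<open>0 < x\<close>
    by (simp add: power2_eq_square[symmetric] real_sqrt_divide field_simps)
  show ?thesis
  proof
    show "0 < l" unfolding l_def using \<open>0 < B\<close> \<open>0 < x\<close> by simp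
    have "x / (4 * B) \<le> 1/4"
      using True \<open>0 < B\<close> by (simp add: field_simps)
    then have "l\<^sup>2 \<le> (1/2)\<^sup>2"
      using \<open>l\<^sup>2 = x / (4 * B)\<close> by (simp add: power2_eq_square)
    then show "l \<le> 1/2"
      by (rule power2_le_imp_le) simp
    have "4 * l\<^sup>2 * B = x"
      using \<open>l\<^sup>2 = x / (4 * B)\<close> \<open>0 < B\<close> by simp
    moreover have "0 \<le> l * x"
      using \<open>0 < l\<close> \<open>0 < x\<close> by simp
    moreover have "l * (5 * (sqrt (B * x) + x)) = 5 * (l * sqrt (B * x)) + 5 * (l * x)"
      by (simp add: algebra_simps)
    ultimately show "4 * l\<^sup>2 * B - l * (5 * (sqrt (B * x) + x)) \<le> - x"
      using \<open>l * sqrt (B * x) = x / 2\<close> \<open>0 < x\<close> by linarith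
  qed
next
  case False
  have "0 \<le> sqrt (B * x)"
    using \<open>0 \<le> B\<close> \<open>0 < x\<close> by simp
  show ?thesis
  proof
    show "4 * (1/2)\<^sup>2 * B - 1/2 * (5 * (sqrt (B * x) + x)) \<le> - x"
      using False \<open>0 \<le> sqrt (B * x)\<close> \<open>0 < x\<close>
      by (simp add: power2_eq_square field_simps del: real_sqrt_ge_0_iff)
  qed simp_all
qed

theorem lemma3:
  fixes M :: "'a measure" and Z :: "nat \<Rightarrow> 'a \<Rightarrow> real"
    and p :: nat and a x :: real
  assumes "prob_space M"
    and "prob_space.indep_vars M (\<lambda>i. borel) Z {1..p}"
    and "\<And>i. i \<in> {1..p} \<Longrightarrow> distributed M lborel (Z i) std_normal_density"
    and "a \<ge> 1"
    and "x > 0"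
  shows "measure M {\<omega> \<in> space M.
            (\<Sum>i=1..p. ((Z i \<omega>)\<^sup>2 - nu a) * indicator {y. \<bar>y\<bar> \<ge> a} (Z i \<omega>))
              \<le> - 5 * (sqrt (real p * exp (- a\<^sup>2 / 2) * x) + x)}
         \<le> exp (- x)"
proof -
  interpret prob_space M by fact
  define B where "B = real p * exp (- a\<^sup>2 / 2)"
  obtain l where l: "0 < l" "l \<le> 1/2" and exponent: "4 * l\<^sup>2 * B - l * (5 * (sqrt (B * x) + x)) \<le> - x"
    using Chernoff_parameter_choice[of B x] \<open>x > 0\<close> by (auto simp: B_def)
  have "indep_vars (\<lambda>_. borel) (\<lambda>i \<omega>. tail_excess a (Z i \<omega>)) {1..p}"
    by (rule indep_vars_compose2[OF assms(2)]) simp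
  then have "prob {\<omega> \<in> space M. (\<Sum>i=1..p. tail_excess a (Z i \<omega>)) \<le> - (5 * (sqrt (B * x) + x))}
               \<le> exp (card {1..p} * (4 * l\<^sup>2 * exp (- a\<^sup>2 / 2)) - l * (5 * (sqrt (B * x) + x)))"
    using std_normal_tail_excess_mgf_le_exp[OF assms(3) \<open>a \<ge> 1\<close> l] l
    by (intro indep_sum_lower_tail_Chernoff) auto
  also have "\<dots> \<le> exp (- x)"
    using exponent by (simp add: B_def mult_ac)
  finally show ?thesis
    by (simp add: tail_excess_def B_def)
qed

end
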